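(* Let $\mathcal X$ be a Palais–Smale GKM variety, with its moment graph directed as in the Palais–Smale condition. If $p^v=(p^v_w)_{w\in\mathcal X^T}$ and $q^v=(q^v_w)_{w\in\mathcal X^T}$ are two Knutson–Tao classes corresponding to the same fixed point $v$, then $p^v_w=q^v_w$ for every $w\in\mathcal X^T$.
   Context: Let $T=(\mathbb{C}^* )^n$ and let $\mathcal X$ be a complex projective algebraic variety with an algebraic $T$-action having finitely many fixed points and finitely many one-dimensional orbits, and which is equivariantly formal (a GKM variety). The moment graph has vertex set $\mathcal X^T$ and an edge for each one-dimensional orbit, joining the two fixed points in its closure. When directed, each edge $v\to w$ is labeled $\alpha_{vw}$, the $T$-weight (a linear form in $t_1,\ldots,t_n$) on the tangent line at $v$ of the corresponding orbit closure. Assume that the labels on the edges directed out of any vertex are pairwise linearly independent. $\mathcal X$ is Palais–Smale if the moment graph can be directed so that there is an edge $v\to u$ only if $v$ has more outgoing edges than $u$. By the GKM theorem, $H^*_T(\mathcal X)$ is the ring of tuples $(p_w)_{w\in\mathcal X^T}$ of polynomials in $\mathbb{C}[t_1,\ldots,t_n]$ with $p_{N}-p_{S}\in\langle\alpha\rangle$ for every edge with endpoints $N,S$ and weight $\pm\alpha$. Write $u\succeq_D u'$ if there is a directed path (possibly of length $0$) from $u$ to $u'$. A Knutson–Tao class for $v$ is a class $(p^v_w)_w\in H^*_T(\mathcal X)$ with: (1) $p^v_v=\prod_{v\to w}\alpha_{vw}$, the product over the edges out of $v$; (2) each nonzero $p^v_w$ is homogeneous of degree $\deg p^v_v$; (3)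 $p^v_w=0$ whenever $w\not\succ_D v$. *)

theory Defs
  imports Complex_Main "HOL-Library.Poly_Mapping"
begin

text \<open>Polynomials in the variables t_0, t_1, ... with complex coefficients:
  a finitely supported map from monomials (exponent vectors) to coefficients.\<close>
type_synonym mpoly = "(nat \<Rightarrow>\<^sub>0 nat) \<Rightarrow>\<^sub>0 complex"

definition Const :: "complex \<Rightarrow> mpoly" where
  "Const c = Poly_Mapping.single 0 c"

definition Var :: "nat \<Rightarrow> mpoly" where
  "Var i = Poly_Mapping.single (Poly_Mapping.single i 1) 1"

definition mdeg :: "(nat \<Rightarrow>\<^sub>0 nat) \<Rightarrow> nat" where
  "mdeg m = sum (Poly_Mapping.lookup m) (Poly_Mapping.keys m)"

definition in_vars :: "nat \<Rightarrow> mpoly \<Rightarrow> bool" where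
  "in_vars n p \<longleftrightarrow> (\<forall>m \<in> Poly_Mapping.keys p. Poly_Mapping.keys m \<subseteq> {..<n})"

definition homogeneous :: "nat \<Rightarrow> mpoly \<Rightarrow> bool" where
  "homogeneous d p \<longleftrightarrow> (\<forall>m \<in> Poly_Mapping.keys p. mdeg m = d)"

definition total_degree :: "mpoly \<Rightarrow> nat" where
  "total_degree p = (if Poly_Mapping.keys p = {} then 0 else Max (mdeg ` Poly_Mapping.keys p))"

definition linear_form :: "nat \<Rightarrow> mpoly \<Rightarrow> bool" where
  "linear_form n a \<longleftrightarrow> (\<exists>c. a = (\<Sum>i<n. Const (c i) * Var i))"

definition lin_indep2 :: "mpoly \<Rightarrow> mpoly \<Rightarrow> bool" where
  "lin_indep2 a b \<longleftrightarrow> (\<forall>x y. Const x * a + Const y * b = 0 \<longrightarrow> x = 0 \<and> y = 0)"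

text \<open>A directed moment graph: vertices V (fixed points), edge identifiers Ed
  (one per one-dimensional orbit, oriented), source/target maps, and the label
  of an edge e is the T-weight at its source.\<close>
definition out_edges :: "'e set \<Rightarrow> ('e \<Rightarrow> 'v) \<Rightarrow> 'v \<Rightarrow> 'e set" where
  "out_edges Ed src v = {e \<in> Ed. src e = v}"

definition moment_graph ::
  "nat \<Rightarrow> 'v set \<Rightarrow> 'e set \<Rightarrow> ('e \<Rightarrow> 'v) \<Rightarrow> ('e \<Rightarrow> 'v) \<Rightarrow> ('e \<Rightarrow> mpoly) \<Rightarrow> bool" where
  "moment_graph n V Ed src tgt lab \<longleftrightarrow>
     finite V \<and> finite Ed \<and>
     (\<forall>e\<in>Ed. src e \<in> V \<and> tgt e \<in> V \<and> src e \<noteq> tgt e \<and>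
              linear_form n (lab e) \<and> lab e \<noteq> 0) \<and>
     (\<forall>e\<in>Ed. \<forall>e'\<in>Ed. e \<noteq> e' \<and> src e = src e' \<longrightarrow> lin_indep2 (lab e) (lab e'))"

definition palais_smale :: "'e set \<Rightarrow> ('e \<Rightarrow> 'v) \<Rightarrow> ('e \<Rightarrow> 'v) \<Rightarrow> bool" where
  "palais_smale Ed src tgt \<longleftrightarrow>
     (\<forall>e\<in>Ed. card (out_edges Ed src (tgt e)) < card (out_edges Ed src (src e)))"

definition succeq_D :: "'e set \<Rightarrow> ('e \<Rightarrow> 'v) \<Rightarrow> ('e \<Rightarrow> 'v) \<Rightarrow> 'v \<Rightarrow> 'v \<Rightarrow> bool" where
  "succeq_D Ed src tgt u u' \<longleftrightarrow> (u, u') \<in> {(src e, tgt e) | e. e \<in> Ed}\<^sup>*"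

text \<open>The GKM description of H_T^*(X): tuples of polynomials in C[t_0..t_(n-1)]
  with p_N - p_S in the ideal generated by the weight of each edge.\<close>
definition gkm_class ::
  "nat \<Rightarrow> 'v set \<Rightarrow> 'e set \<Rightarrow> ('e \<Rightarrow> 'v) \<Rightarrow> ('e \<Rightarrow> 'v) \<Rightarrow> ('e \<Rightarrow> mpoly) \<Rightarrow> ('v \<Rightarrow> mpoly) \<Rightarrow> bool" where
  "gkm_class n V Ed src tgt lab p \<longleftrightarrow>
     (\<forall>w\<in>V. in_vars n (p w)) \<and>
     (\<forall>e\<in>Ed. p (src e) - p (tgt e) \<in> {lab e * r | r. in_vars n r})"

definition knutson_tao_class ::
  "nat \<Rightarrow> 'v set \<Rightarrow> 'e set \<Rightarrow> ('e \<Rightarrow> 'v) \<Rightarrow> ('e \<Rightarrow> 'v) \<Rightarrow> ('e \<Rightarrow> mpoly) \<Rightarrow> 'v \<Rightarrow> ('v \<Rightarrow> mpoly) \<Rightarrow> bool" where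
  "knutson_tao_class n V Ed src tgt lab v p \<longleftrightarrow>
     gkm_class n V Ed src tgt lab p \<and>
     p v = (\<Prod>e\<in>out_edges Ed src v. lab e) \<and>
     (\<forall>w\<in>V. p w \<noteq> 0 \<longrightarrow> homogeneous (total_degree (p v)) (p w)) \<and>
     (\<forall>w\<in>V. \<not> succeq_D Ed src tgt w v \<longrightarrow> p w = 0)"

end

theory Submission
  imports Defs "HOL-Computational_Algebra.Factorial_Ring"
begin

(* Induct on the number of edges leaving w. If w = v or w does not reach v, then p_w = q_w by
   the normalisation and support conditions. Otherwise every edge w -> u ends, by the
   Palais-Smale condition, at a vertex with fewer outgoing edges, where p_u = q_u by induction;
   so the label of the edge divides p_w - q_w. Linear forms are prime (modulo a nonzero linear
   form one variable can be eliminated) and pairwise independent ones do not divide each other,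
   so the product of the labels at w, homogeneous of degree |out(w)|, divides p_w - q_w.
   But p_w - q_w is homogeneous of degree deg p_v <= |out(v)| < |out(w)|, hence zero. *)

lemma poly_mapping_sum_single:
  "f = (\<Sum>m\<in>Poly_Mapping.keys f. Poly_Mapping.single m (Poly_Mapping.lookup f m))"
  by (rule poly_mapping_eqI) (simp add: lookup_sum lookup_single when_def in_keys_iff)

lemma Const_mult: "Const a * Const b = Const (a * b)"
  by (simp add: Const_def mult_single)

lemma Const_add: "Const (a + b) = Const a + Const b"
  by (simp add: Const_def single_add)

lemma Const_0 [simp]: "Const 0 = 0"
  by (simp add: Const_def)

lemma Const_1 [simp]: "Const 1 = 1"
  by (simp add: Const_def)

lemma Const_single: "Const c * Poly_Mapping.single m 1 = Poly_Mapping.single m c"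
  by (simp add: Const_def mult_single)

lemma Const_Var: "Const c * Var i = Poly_Mapping.single (Poly_Mapping.single i 1) c"
  by (simp add: Var_def Const_single)

lemma Var_power: "Var i ^ k = Poly_Mapping.single (Poly_Mapping.single i k) 1"
  by (induction k) (simp_all add: Var_def mult_single single_add[symmetric] add.commute)

lemma prod_single_one:
  fixes F :: "'b \<Rightarrow> 'k::comm_monoid_add"
  shows "(\<Prod>i\<in>S. Poly_Mapping.single (F i) (1::'a::comm_semiring_1)) = Poly_Mapping.single (\<Sum>i\<in>S. F i) 1"
  by (induction S rule: infinite_finite_induct) (simp_all add: mult_single)

definition monomial_subst :: "(nat \<Rightarrow> mpoly) \<Rightarrow> (nat \<Rightarrow>\<^sub>0 nat) \<Rightarrow> mpoly" where
  "monomial_subst s m = (\<Prod>i\<in>Poly_Mapping.keys m. s i ^ Poly_Mapping.lookup m i)"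

definition mpoly_subst :: "(nat \<Rightarrow> mpoly) \<Rightarrow> mpoly \<Rightarrow> mpoly" where
  "mpoly_subst s f = (\<Sum>m\<in>Poly_Mapping.keys f. Const (Poly_Mapping.lookup f m) * monomial_subst s m)"

lemma monomial_subst_superset:
  assumes "finite S" "Poly_Mapping.keys m \<subseteq> S"
  shows "monomial_subst s m = (\<Prod>i\<in>S. s i ^ Poly_Mapping.lookup m i)"
  unfolding monomial_subst_def
  by (rule prod.mono_neutral_left) (use assms in \<open>auto simp: in_keys_iff\<close>)

lemma monomial_subst_add: "monomial_subst s (a + b) = monomial_subst s a * monomial_subst s b"
proof -
  let ?S = "Poly_Mapping.keys a \<union> Poly_Mapping.keys b"
  have "monomial_subst s (a + b) = (\<Prod>i\<in>?S. s i ^ Poly_Mapping.lookup (a + b) i)"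
    by (rule monomial_subst_superset) (use keys_add[of a b] in auto)
  also have "\<dots> = (\<Prod>i\<in>?S. s i ^ Poly_Mapping.lookup a i) * (\<Prod>i\<in>?S. s i ^ Poly_Mapping.lookup b i)"
    by (simp add: lookup_add power_add prod.distrib)
  also have "\<dots> = monomial_subst s a * monomial_subst s b"
    using monomial_subst_superset[of ?S a s] monomial_subst_superset[of ?S b s] by simp
  finally show ?thesis .
qed

lemma monomial_subst_single: "monomial_subst s (Poly_Mapping.single i 1) = s i"
  by (simp add: monomial_subst_def)

lemma monomial_subst_Var: "monomial_subst Var m = Poly_Mapping.single m 1"
proof -
  have "monomial_subst Var m =
      Poly_Mapping.single (\<Sum>i\<in>Poly_Mapping.keys m. Poly_Mapping.single i (Poly_Mapping.lookup m i)) 1"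
    by (simp add: monomial_subst_def Var_power prod_single_one)
  then show ?thesis
    using poly_mapping_sum_single[of m] by simp
qed

lemma mpoly_subst_superset:
  assumes "finite S" "Poly_Mapping.keys f \<subseteq> S"
  shows "mpoly_subst s f = (\<Sum>m\<in>S. Const (Poly_Mapping.lookup f m) * monomial_subst s m)"
  unfolding mpoly_subst_def
  by (rule sum.mono_neutral_left) (use assms in \<open>auto simp: in_keys_iff\<close>)

lemma mpoly_subst_add: "mpoly_subst s (f + g) = mpoly_subst s f + mpoly_subst s g"
proof -
  let ?S = "Poly_Mapping.keys f \<union> Poly_Mapping.keys g"
  have "mpoly_subst s (f + g) = (\<Sum>m\<in>?S. Const (Poly_Mapping.lookup (f + g) m) * monomial_subst s m)"
    by (rule mpoly_subst_superset) (use keys_add[of f g] in auto)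
  also have "\<dots> = (\<Sum>m\<in>?S. Const (Poly_Mapping.lookup f m) * monomial_subst s m)
                 + (\<Sum>m\<in>?S. Const (Poly_Mapping.lookup g m) * monomial_subst s m)"
    by (simp add: lookup_add Const_add distrib_right sum.distrib)
  also have "\<dots> = mpoly_subst s f + mpoly_subst s g"
    using mpoly_subst_superset[of ?S f s] mpoly_subst_superset[of ?S g s] by simp
  finally show ?thesis .
qed

lemma mpoly_subst_0 [simp]: "mpoly_subst s 0 = 0"
  by (simp add: mpoly_subst_def)

lemma mpoly_subst_sum: "mpoly_subst s (sum F S) = (\<Sum>x\<in>S. mpoly_subst s (F x))"
  by (induction S rule: infinite_finite_induct) (simp_all add: mpoly_subst_add)

lemma mpoly_subst_single: "mpoly_subst s (Poly_Mapping.single m c) = Const c * monomial_subst s m"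
  by (simp add: mpoly_subst_def)

lemma mpoly_subst_mult: "mpoly_subst s (f * g) = mpoly_subst s f * mpoly_subst s g"
proof -
  let ?F = "Poly_Mapping.keys f" and ?G = "Poly_Mapping.keys g"
  let ?f = "Poly_Mapping.lookup f" and ?g = "Poly_Mapping.lookup g"
  have "f * g = (\<Sum>a\<in>?F. Poly_Mapping.single a (?f a)) * (\<Sum>b\<in>?G. Poly_Mapping.single b (?g b))"
    using poly_mapping_sum_single[of f] poly_mapping_sum_single[of g] by simp
  also have "\<dots> = (\<Sum>a\<in>?F. \<Sum>b\<in>?G. Poly_Mapping.single (a + b) (?f a * ?g b))"
    by (simp add: sum_product mult_single)
  finally have "mpoly_subst s (f * g) =
      (\<Sum>a\<in>?F. \<Sum>b\<in>?G. Const (?f a) * monomial_subst s a * (Const (?g b) * monomial_subst s b))"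
    by (simp add: mpoly_subst_sum mpoly_subst_single monomial_subst_add Const_mult[symmetric]
        algebra_simps)
  also have "\<dots> = mpoly_subst s f * mpoly_subst s g"
    by (simp add: mpoly_subst_def sum_product)
  finally show ?thesis .
qed

lemma mpoly_subst_scaled_Var: "mpoly_subst s (Const c * Var i) = Const c * s i"
  unfolding Const_Var mpoly_subst_single monomial_subst_single ..

lemma dvd_diff_mult:
  fixes l :: "'a::comm_ring_1"
  assumes "l dvd a - b" "l dvd c - d"
  shows "l dvd a * c - b * d"
proof -
  have "a * c - b * d = a * (c - d) + (a - b) * d"
    by (simp add: algebra_simps)
  then show ?thesis
    using assms by (metis dvd_add dvd_mult dvd_mult2)
qed

lemma dvd_diff_prod_power:
  fixes l :: "'a::comm_ring_1"
  assumes "\<And>i. i \<in> S \<Longrightarrow> l dvd x i - y i"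
  shows "l dvd (\<Prod>i\<in>S. x i ^ k i) - (\<Prod>i\<in>S. y i ^ k i)"
proof -
  have "l dvd a ^ j - b ^ j" if "l dvd a - b" for a b :: 'a and j
    by (induction j) (simp_all add: dvd_diff_mult that)
  with assms show ?thesis
    by (induction S rule: infinite_finite_induct) (simp_all add: dvd_diff_mult)
qed

lemma dvd_diff_mpoly_subst:
  assumes "\<And>i. l dvd Var i - s i"
  shows "l dvd f - mpoly_subst s f"
proof -
  have "f - mpoly_subst s f =
      (\<Sum>m\<in>Poly_Mapping.keys f. Const (Poly_Mapping.lookup f m) * (monomial_subst Var m - monomial_subst s m))"
    by (subst (1) poly_mapping_sum_single[of f])
      (simp add: mpoly_subst_def right_diff_distrib sum_subtractf monomial_subst_Var Const_single)
  moreover have "l dvd monomial_subst Var m - monomial_subst s m" for m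
    unfolding monomial_subst_def by (rule dvd_diff_prod_power) (use assms in auto)
  ultimately show ?thesis
    by (simp add: dvd_sum)
qed

(* Substituting t_j - l / c_j for a variable t_j whose coefficient c_j in l is nonzero
   gives a ring endomorphism that kills l and is the identity modulo l. *)
lemma linear_form_elimination:
  assumes "linear_form n l" "l \<noteq> 0"
  obtains s where "\<And>i. l dvd Var i - s i" "mpoly_subst s l = 0"
    "\<And>l'. linear_form n l' \<Longrightarrow> \<exists>x. mpoly_subst s l' = l' - Const x * l"
proof -
  obtain c where c: "l = (\<Sum>i<n. Const (c i) * Var i)"
    using assms(1) linear_form_def by blast
  obtain j where j: "j < n" "c j \<noteq> 0"
    using assms(2) c by (metis (no_types, lifting) Const_0 lessThan_iff mult_zero_left sum.neutral)
  define s where "s i = (if i = j then Var j - Const (1 / c j) * l else Var i)" for i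
  have subst_linear: "mpoly_subst s (\<Sum>i<n. Const (b i) * Var i)
      = (\<Sum>i<n. Const (b i) * Var i) - Const (b j / c j) * l" for b
  proof -
    have "mpoly_subst s (\<Sum>i<n. Const (b i) * Var i)
        = (\<Sum>i<n. Const (b i) * Var i - (if i = j then Const (b j / c j) * l else 0))"
      unfolding mpoly_subst_sum mpoly_subst_scaled_Var
      by (rule sum.cong) (auto simp: s_def right_diff_distrib Const_mult mult.assoc[symmetric])
    also have "\<dots> = (\<Sum>i<n. Const (b i) * Var i) - Const (b j / c j) * l"
      by (simp add: sum_subtractf j)
    finally show ?thesis .
  qed
  show ?thesis
  proof
    show "l dvd Var i - s i" for i
      by (simp add: s_def)
    show "mpoly_subst s l = 0"
      using subst_linear[of c] j by (simp flip: c)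
    show "\<exists>x. mpoly_subst s l' = l' - Const x * l" if "linear_form n l'" for l'
      using that subst_linear unfolding linear_form_def by blast
  qed
qed

lemma mdeg_superset:
  assumes "finite S" "Poly_Mapping.keys m \<subseteq> S"
  shows "mdeg m = sum (Poly_Mapping.lookup m) S"
  unfolding mdeg_def
  by (rule sum.mono_neutral_left) (use assms in \<open>auto simp: in_keys_iff\<close>)

lemma mdeg_add: "mdeg (a + b) = mdeg a + mdeg b"
proof -
  let ?S = "Poly_Mapping.keys a \<union> Poly_Mapping.keys b"
  have "mdeg (a + b) = sum (Poly_Mapping.lookup (a + b)) ?S"
    by (rule mdeg_superset) (use keys_add[of a b] in auto)
  also have "\<dots> = sum (Poly_Mapping.lookup a) ?S + sum (Poly_Mapping.lookup b) ?S"
    by (simp add: lookup_add sum.distrib)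
  also have "\<dots> = mdeg a + mdeg b"
    using mdeg_superset[of ?S a] mdeg_superset[of ?S b] by simp
  finally show ?thesis .
qed

lemma mdeg_0 [simp]: "mdeg 0 = 0"
  by (simp add: mdeg_def)

lemma homogeneous_0 [simp]: "homogeneous d 0"
  by (simp add: homogeneous_def)

lemma homogeneous_diff:
  assumes "homogeneous d f" "homogeneous d g"
  shows "homogeneous d (f - g)"
  using assms keys_diff[of f g] unfolding homogeneous_def by blast

lemma homogeneous_mult:
  assumes "homogeneous a f" "homogeneous b g"
  shows "homogeneous (a + b) (f * g)"
  using assms keys_mult[of f g] unfolding homogeneous_def by (auto simp: mdeg_add)

lemma homogeneous_prod:
  assumes "\<And>e. e \<in> S \<Longrightarrow> homogeneous (d e) (L e)"
  shows "homogeneous (\<Sum>e\<in>S. d e) (\<Prod>e\<in>S. L e)"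
  using assms
proof (induction S rule: infinite_finite_induct)
  case (insert x S)
  then show ?case
    by (simp add: homogeneous_mult)
qed (simp_all add: homogeneous_def mdeg_def)

lemma homogeneous_linear_form:
  assumes "linear_form n l"
  shows "homogeneous 1 l"
proof -
  obtain c where "l = (\<Sum>i<n. Const (c i) * Var i)"
    using assms linear_form_def by blast
  moreover have "homogeneous 1 (Const (c i) * Var i)" for i
    by (simp add: Const_Var homogeneous_def mdeg_def)
  ultimately show ?thesis
    using keys_sum[of "\<lambda>i. Const (c i) * Var i" "{..<n}"] unfolding homogeneous_def by blast
qed

lemma homogeneous_dvd_mdeg_le:
  assumes "homogeneous d f" "f dvd g" "m \<in> Poly_Mapping.keys g"
  shows "d \<le> mdeg m"
proof -
  obtain h where "g = f * h"
    using assms(2) by blast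
  then obtain a b where "m = a + b" "a \<in> Poly_Mapping.keys f"
    using keys_mult[of f h] assms(3) by blast
  then show ?thesis
    using assms(1) by (simp add: homogeneous_def mdeg_add)
qed

lemma total_degree_le_if_homogeneous:
  assumes "homogeneous d f"
  shows "total_degree f \<le> d"
  using assms by (simp add: total_degree_def homogeneous_def)

lemma linear_form_prime_elem:
  assumes "linear_form n l" "l \<noteq> 0"
  shows "prime_elem l"
proof (rule prime_elemI)
  show "\<not> l dvd 1"
  proof
    assume "l dvd 1"
    then have "1 \<le> mdeg 0"
      by (rule homogeneous_dvd_mdeg_le[OF homogeneous_linear_form[OF assms(1)]]) simp
    then show False
      by simp
  qed
  obtain s where dvd_diff: "\<And>f. l dvd f - mpoly_subst s f" and kills: "mpoly_subst s l = 0"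
    using linear_form_elimination[OF assms] dvd_diff_mpoly_subst by metis
  show "l dvd g \<or> l dvd h" if dvd_mult: "l dvd g * h" for g h
  proof -
    obtain t where "g * h = l * t"
      using dvd_mult ..
    then have "mpoly_subst s g * mpoly_subst s h = 0"
      by (metis kills mpoly_subst_mult mult_zero_left)
    then show ?thesis
      using dvd_diff[of g] dvd_diff[of h] by auto
  qed
qed (fact assms(2))

lemma linear_form_not_dvd:
  assumes "linear_form n l" "l \<noteq> 0" "linear_form n l'" "lin_indep2 l l'"
  shows "\<not> l dvd l'"
proof
  assume "l dvd l'"
  then obtain t where t: "l' = l * t" ..
  obtain s where kills: "mpoly_subst s l = 0"
    and linear: "\<And>l'. linear_form n l' \<Longrightarrow> \<exists>x. mpoly_subst s l' = l' - Const x * l"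
    using linear_form_elimination[OF assms(1,2)] by metis
  obtain x where "mpoly_subst s l' = l' - Const x * l"
    using linear assms(3) by blast
  moreover have "mpoly_subst s l' = 0"
    by (simp add: t mpoly_subst_mult kills)
  ultimately have "Const x * l + Const (-1) * l' = 0"
    by (simp add: Const_def single_uminus)
  then show False
    using assms(4) unfolding lin_indep2_def by (metis neg_equal_0_iff_equal one_neq_zero)
qed

lemma prime_elem_dvd_prod_iff:
  fixes p :: "'a::comm_semiring_1"
  assumes "prime_elem p" "finite S"
  shows "p dvd (\<Prod>e\<in>S. L e) \<longleftrightarrow> (\<exists>e\<in>S. p dvd L e)"
  using assms(2)
  by (induction S rule: finite_induct) (use assms(1) in \<open>auto simp: prime_elem_dvd_mult_iff prime_elem_not_unit\<close>)

lemma prod_prime_elems_dvd: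
  fixes L :: "'b \<Rightarrow> 'a::comm_semiring_1"
  assumes "\<And>e. e \<in> S \<Longrightarrow> prime_elem (L e)"
    and "\<And>e e'. e \<in> S \<Longrightarrow> e' \<in> S \<Longrightarrow> e \<noteq> e' \<Longrightarrow> \<not> L e dvd L e'"
    and "\<And>e. e \<in> S \<Longrightarrow> L e dvd f"
  shows "(\<Prod>e\<in>S. L e) dvd f"
  using assms
proof (induction S rule: infinite_finite_induct)
  case (insert x S)
  have "prod L S dvd f"
    by (rule insert.IH) (use insert.prems in auto)
  then obtain g where g: "f = prod L S * g" ..
  have prime: "prime_elem (L x)"
    using insert.prems(1) by simp
  have "\<not> L x dvd prod L S"
    using insert.hyps insert.prems(2) by (auto simp: prime_elem_dvd_prod_iff[OF prime])
  moreover have "L x dvd prod L S * g"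
    using insert.prems(3) g by simp
  ultimately have "L x dvd g"
    using prime by (simp add: prime_elem_dvd_mult_iff)
  then show ?case
    using g insert.hyps by (simp add: mult.commute mult_dvd_mono)
qed simp_all

lemma card_out_edges_less_if_path:
  assumes "palais_smale Ed src tgt" "succeq_D Ed src tgt u u'" "u \<noteq> u'"
  shows "card (out_edges Ed src u') < card (out_edges Ed src u)"
proof -
  have "u = u' \<or> card (out_edges Ed src u') < card (out_edges Ed src u)"
    using assms(2) unfolding succeq_D_def
  proof (induction rule: rtrancl_induct)
    case (step y z)
    then obtain e where "e \<in> Ed" "y = src e" "z = tgt e"
      by blast
    then have "card (out_edges Ed src z) < card (out_edges Ed src y)"
      using assms(1) unfolding palais_smale_def by auto
    then show ?case
      using step.IH by auto
  qed simp
  then show ?thesis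
    using assms(3) by simp
qed

lemma gkm_class_edge_dvd:
  assumes "gkm_class n V Ed src tgt lab p" "e \<in> Ed"
  shows "lab e dvd p (src e) - p (tgt e)"
  using assms unfolding gkm_class_def by auto

lemma homogeneous_prod_out_labels:
  assumes "moment_graph n V Ed src tgt lab"
  shows "homogeneous (card (out_edges Ed src u)) (\<Prod>e\<in>out_edges Ed src u. lab e)"
proof -
  have "homogeneous (\<Sum>e\<in>out_edges Ed src u. 1) (\<Prod>e\<in>out_edges Ed src u. lab e)"
    by (rule homogeneous_prod)
      (use assms in \<open>unfold moment_graph_def out_edges_def, blast intro: homogeneous_linear_form\<close>)
  then show ?thesis
    by simp
qed

lemma knutson_tao_class_homogeneous:
  assumes "knutson_tao_class n V Ed src tgt lab v p" "w \<in> V"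
  shows "homogeneous (total_degree (\<Prod>e\<in>out_edges Ed src v. lab e)) (p w)"
  using assms by (cases "p w = 0") (auto simp: knutson_tao_class_def)

lemma prod_out_labels_dvd_diff:
  assumes mg: "moment_graph n V Ed src tgt lab"
    and p: "gkm_class n V Ed src tgt lab p" and q: "gkm_class n V Ed src tgt lab q"
    and agree: "\<And>e. e \<in> out_edges Ed src w \<Longrightarrow> p (tgt e) = q (tgt e)"
  shows "(\<Prod>e\<in>out_edges Ed src w. lab e) dvd p w - q w"
proof (rule prod_prime_elems_dvd)
  let ?out = "out_edges Ed src w"
  have labels: "linear_form n (lab e)" "lab e \<noteq> 0" if "e \<in> ?out" for e
    using mg that by (auto simp: moment_graph_def out_edges_def)
  show "prime_elem (lab e)" if "e \<in> ?out" for e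
    using labels[OF that] by (rule linear_form_prime_elem)
  show "\<not> lab e dvd lab e'" if "e \<in> ?out" "e' \<in> ?out" "e \<noteq> e'" for e e'
    using that labels[OF that(1)] labels[OF that(2)] mg linear_form_not_dvd
    by (fastforce simp: moment_graph_def out_edges_def)
  show "lab e dvd p w - q w" if e: "e \<in> ?out" for e
  proof -
    have "e \<in> Ed" and src: "src e = w"
      using e by (auto simp: out_edges_def)
    then have "lab e dvd (p w - p (tgt e)) - (q w - q (tgt e))"
      using dvd_diff[OF gkm_class_edge_dvd[OF p] gkm_class_edge_dvd[OF q], of e] src by simp
    then show ?thesis
      using agree[OF e] by simp
  qed
qed

lemma knutson_tao_classes_eq_at:
  assumes mg: "moment_graph n V Ed src tgt lab"
    and p: "knutson_tao_class n V Ed src tgt lab v p"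
    and q: "knutson_tao_class n V Ed src tgt lab v q"
    and "w \<in> V" and more_out: "card (out_edges Ed src v) < card (out_edges Ed src w)"
    and agree: "\<And>e. e \<in> out_edges Ed src w \<Longrightarrow> p (tgt e) = q (tgt e)"
  shows "p w = q w"
proof (rule ccontr)
  assume "p w \<noteq> q w"
  then obtain m where m: "m \<in> Poly_Mapping.keys (p w - q w)"
    by (metis keys_eq_empty all_not_in_conv eq_iff_diff_eq_0)
  have "(\<Prod>e\<in>out_edges Ed src w. lab e) dvd p w - q w"
    by (rule prod_out_labels_dvd_diff[OF mg]) (use p q agree in \<open>simp_all add: knutson_tao_class_def\<close>)
  then have "card (out_edges Ed src w) \<le> mdeg m"
    using homogeneous_dvd_mdeg_le[OF homogeneous_prod_out_labels[OF mg] _ m] by blast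
  moreover have "mdeg m \<le> card (out_edges Ed src v)"
  proof -
    let ?pv = "\<Prod>e\<in>out_edges Ed src v. lab e"
    have "homogeneous (total_degree ?pv) (p w - q w)"
      using knutson_tao_class_homogeneous[OF p \<open>w \<in> V\<close>] knutson_tao_class_homogeneous[OF q \<open>w \<in> V\<close>]
      by (rule homogeneous_diff)
    then have "mdeg m = total_degree ?pv"
      using m by (simp add: homogeneous_def)
    also have "\<dots> \<le> card (out_edges Ed src v)"
      by (rule total_degree_le_if_homogeneous[OF homogeneous_prod_out_labels[OF mg]])
    finally show ?thesis .
  qed
  ultimately show False
    using more_out by simp
qed

theorem mainTheorem4:
  fixes n :: nat and V :: "'v set" and Ed :: "'e set"
    and src tgt :: "'e \<Rightarrow> 'v" and lab :: "'e \<Rightarrow> mpoly"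
    and v :: 'v and p q :: "'v \<Rightarrow> mpoly"
  assumes "moment_graph n V Ed src tgt lab"
    and "palais_smale Ed src tgt"
    and "v \<in> V"
    and "knutson_tao_class n V Ed src tgt lab v p"
    and "knutson_tao_class n V Ed src tgt lab v q"
  shows "\<forall>w\<in>V. p w = q w"
proof
  fix w
  assume "w \<in> V"
  then show "p w = q w"
  proof (induction "card (out_edges Ed src w)" arbitrary: w rule: less_induct)
    case less
    consider "w = v" | "\<not> succeq_D Ed src tgt w v" | "w \<noteq> v" "succeq_D Ed src tgt w v"
      by blast
    then show ?case
    proof cases
      case 1
      then show ?thesis
        using assms(4,5) by (simp add: knutson_tao_class_def)
    next
      case 2
      then show ?thesis
        using assms(4,5) less.prems by (simp add: knutson_tao_class_def)
    next
      case 3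
      have "p (tgt e) = q (tgt e)" if "e \<in> out_edges Ed src w" for e
        using that assms(1,2) by (intro less.hyps)
          (auto simp: palais_smale_def out_edges_def moment_graph_def)
      then show ?thesis
        by (rule knutson_tao_classes_eq_at[OF assms(1,4,5) less.prems
              card_out_edges_less_if_path[OF assms(2) 3(2,1)]])
    qed
  qed
qed

end
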